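(* Let $(\mathcal{C},\mathbb{E},\mathfrak{s})$ be an extriangulated category with enough injective objects. If $\mathcal{I}$ is a special precovering ideal of $\mathcal{C}$, then $\mathcal{I}^{\perp_{\mathbb{E}}}$ is a special preenveloping ideal.
   Context: An extriangulated category $(\mathcal{C},\mathbb{E},\mathfrak{s})$ (Nakaoka–Palu): additive $\mathcal{C}$, biadditive $\mathbb{E}:\mathcal{C}^{\mathrm{op}}\times\mathcal{C}\to\mathrm{Ab}$, additive realization $\mathfrak{s}$ assigning to each $\delta\in\mathbb{E}(C,A)$ an equivalence class of sequences $A\to B\to C$, forming $\mathbb{E}$-triangles $A\to B\to C\overset{\delta}{\dashrightarrow}$, satisfying (ET1)–(ET4), (ET3)$^{\mathrm{op}}$, (ET4)$^{\mathrm{op}}$. Notation $a_\star\delta=\mathbb{E}(C,a)(\delta)$, $c^\star\delta=\mathbb{E}(c,A)(\delta)$. A morphism of $\mathbb{E}$-triangles is a commuting triple $(a,b,c)$ with $a_\star\delta=c^\star\delta'$. An object $E$ is injective if for every $\mathbb{E}$-triangle $A\xrightarrow{x}B\to C\overset{\delta}{\dashrightarrow}$ every $A\to E$ factors through $x$ (equivalently $\mathbb{E}(C,E)=0$ for all $C$); $\mathcal{C}$ has enough injective objects if every $A$ admits an $\mathbb{E}$-triangle $A\to E\to C\overset{\delta}{\dashrightarrow}$ with $E$ injective. An ideal: class of morphisms with zeros, closed under sums and two-sided composition. $\mathcal{M}^{\perp_{\mathbb{E}}}=\{g:A\to Y\mid m^\star g_\star\delta=0\ \forall m\in\mathcal{M},\,m:X\to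 C,\ \forall\delta\in\mathbb{E}(C,A)\}$; ${}^{\perp_{\mathbb{E}}}\mathcal{M}=\{g:X\to C\mid g^\star m_\star\delta=0\ \forall m\in\mathcal{M},\,m:A\to Y,\ \forall\delta\in\mathbb{E}(C,A)\}$. A special $\mathcal{I}$-precover of $C$: $i:X\to C$ in $\mathcal{I}$ with $\mathbb{E}$-triangles $A\to B\to C\overset{\delta}{\dashrightarrow}$, $A'\to X\xrightarrow{i}C\overset{\delta'}{\dashrightarrow}$ and a morphism $(j,b,\mathrm{id}_C)$ between them with $j\in\mathcal{I}^{\perp_{\mathbb{E}}}$. A special $\mathcal{J}$-preenvelope of $A$: $e:A\to X$ in $\mathcal{J}$ with $\mathbb{E}$-triangles $A\xrightarrow{e}X\to Y\overset{\delta}{\dashrightarrow}$, $A\to B\to C\overset{\delta'}{\dashrightarrow}$ and a morphism $(\mathrm{id}_A,b,j)$ from the first to the second with $j\in{}^{\perp_{\mathbb{E}}}\mathcal{J}$. Special precovering (resp. preenveloping) ideal: every object has a special precover (resp. preenvelope). *)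

theory Defs
  imports "HOL-Algebra.Group"
begin

text \<open>
  Extriangulated categories (Nakaoka--Palu), encoded with explicit carriers.
  Objects have type 'o, morphisms type 'm, extension elements type 'e.
  Morphisms carry a domain and codomain; Cmp g f is the composite g o f.
  Ext C A is the abelian group E(C,A); Push C a d is a_* d = E(C,a)(d)
  and Pull c A d is c^* d = E(c,A)(d).
  Rlz C A d x y means that the sequence A -x-> B -y-> C (B = Cod x) belongs
  to the equivalence class s(d) for d in E(C,A), i.e. A -x-> B -y-> C -d-> is
  an E-triangle.
\<close>

record ('o, 'm, 'e) extri =
  Ob :: "'o set"
  Mor :: "'m set"
  Dom :: "'m \<Rightarrow> 'o"
  Cod :: "'m \<Rightarrow> 'o"
  Cmp :: "'m \<Rightarrow> 'm \<Rightarrow> 'm"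
  Idm :: "'o \<Rightarrow> 'm"
  Madd :: "'m \<Rightarrow> 'm \<Rightarrow> 'm"
  Mzero :: "'o \<Rightarrow> 'o \<Rightarrow> 'm"
  Ext :: "'o \<Rightarrow> 'o \<Rightarrow> 'e set"
  Eadd :: "'o \<Rightarrow> 'o \<Rightarrow> 'e \<Rightarrow> 'e \<Rightarrow> 'e"
  Ezero :: "'o \<Rightarrow> 'o \<Rightarrow> 'e"
  Push :: "'o \<Rightarrow> 'm \<Rightarrow> 'e \<Rightarrow> 'e"
  Pull :: "'m \<Rightarrow> 'o \<Rightarrow> 'e \<Rightarrow> 'e"
  Rlz :: "'o \<Rightarrow> 'o \<Rightarrow> 'e \<Rightarrow> 'm \<Rightarrow> 'm \<Rightarrow> bool"

definition Hom :: "('o, 'm, 'e) extri \<Rightarrow> 'o \<Rightarrow> 'o \<Rightarrow> 'm set" where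
  "Hom \<C> X Y = {f \<in> Mor \<C>. Dom \<C> f = X \<and> Cod \<C> f = Y}"

definition is_category :: "('o, 'm, 'e) extri \<Rightarrow> bool" where
  "is_category \<C> \<longleftrightarrow>
     (\<forall>f \<in> Mor \<C>. Dom \<C> f \<in> Ob \<C> \<and> Cod \<C> f \<in> Ob \<C>) \<and>
     (\<forall>X \<in> Ob \<C>. Idm \<C> X \<in> Hom \<C> X X) \<and>
     (\<forall>X Y Z f g. f \<in> Hom \<C> X Y \<longrightarrow> g \<in> Hom \<C> Y Z \<longrightarrow> Cmp \<C> g f \<in> Hom \<C> X Z) \<and>
     (\<forall>X Y f. f \<in> Hom \<C> X Y \<longrightarrow> Cmp \<C> f (Idm \<C> X) = f \<and> Cmp \<C> (Idm \<C> Y) f = f) \<and>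
     (\<forall>W X Y Z f g h. f \<in> Hom \<C> W X \<longrightarrow> g \<in> Hom \<C> X Y \<longrightarrow> h \<in> Hom \<C> Y Z \<longrightarrow>
        Cmp \<C> h (Cmp \<C> g f) = Cmp \<C> (Cmp \<C> h g) f)"

definition HomGrp :: "('o, 'm, 'e) extri \<Rightarrow> 'o \<Rightarrow> 'o \<Rightarrow> 'm monoid" where
  "HomGrp \<C> X Y = \<lparr>carrier = Hom \<C> X Y, mult = Madd \<C>, one = Mzero \<C> X Y\<rparr>"

definition is_preadditive :: "('o, 'm, 'e) extri \<Rightarrow> bool" where
  "is_preadditive \<C> \<longleftrightarrow> is_category \<C> \<and>
     (\<forall>X \<in> Ob \<C>. \<forall>Y \<in> Ob \<C>. comm_group (HomGrp \<C> X Y)) \<and>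
     (\<forall>X Y Z f f' g. f \<in> Hom \<C> X Y \<longrightarrow> f' \<in> Hom \<C> X Y \<longrightarrow> g \<in> Hom \<C> Y Z \<longrightarrow>
        Cmp \<C> g (Madd \<C> f f') = Madd \<C> (Cmp \<C> g f) (Cmp \<C> g f')) \<and>
     (\<forall>X Y Z f g g'. f \<in> Hom \<C> X Y \<longrightarrow> g \<in> Hom \<C> Y Z \<longrightarrow> g' \<in> Hom \<C> Y Z \<longrightarrow>
        Cmp \<C> (Madd \<C> g g') f = Madd \<C> (Cmp \<C> g f) (Cmp \<C> g' f))"

definition is_zero_object :: "('o, 'm, 'e) extri \<Rightarrow> 'o \<Rightarrow> bool" where
  "is_zero_object \<C> Z \<longleftrightarrow> Z \<in> Ob \<C> \<and>
     (\<forall>X \<in> Ob \<C>. (\<exists>!f. f \<in> Hom \<C> Z X) \<and> (\<exists>!f. f \<in> Hom \<C> X Z))"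

definition is_biprod :: "('o, 'm, 'e) extri \<Rightarrow> 'o \<Rightarrow> 'o \<Rightarrow> 'o \<Rightarrow> 'm \<Rightarrow> 'm \<Rightarrow> 'm \<Rightarrow> 'm \<Rightarrow> bool" where
  "is_biprod \<C> X A1 A2 i1 i2 p1 p2 \<longleftrightarrow> X \<in> Ob \<C> \<and>
     i1 \<in> Hom \<C> A1 X \<and> i2 \<in> Hom \<C> A2 X \<and> p1 \<in> Hom \<C> X A1 \<and> p2 \<in> Hom \<C> X A2 \<and>
     Cmp \<C> p1 i1 = Idm \<C> A1 \<and> Cmp \<C> p2 i2 = Idm \<C> A2 \<and>
     Cmp \<C> p1 i2 = Mzero \<C> A2 A1 \<and> Cmp \<C> p2 i1 = Mzero \<C> A1 A2 \<and>
     Madd \<C> (Cmp \<C> i1 p1) (Cmp \<C> i2 p2) = Idm \<C> X"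

definition is_additive :: "('o, 'm, 'e) extri \<Rightarrow> bool" where
  "is_additive \<C> \<longleftrightarrow> is_preadditive \<C> \<and> (\<exists>Z. is_zero_object \<C> Z) \<and>
     (\<forall>A1 \<in> Ob \<C>. \<forall>A2 \<in> Ob \<C>. \<exists>X i1 i2 p1 p2. is_biprod \<C> X A1 A2 i1 i2 p1 p2)"

definition is_iso :: "('o, 'm, 'e) extri \<Rightarrow> 'm \<Rightarrow> bool" where
  "is_iso \<C> b \<longleftrightarrow> b \<in> Mor \<C> \<and> (\<exists>b' \<in> Hom \<C> (Cod \<C> b) (Dom \<C> b).
     Cmp \<C> b' b = Idm \<C> (Dom \<C> b) \<and> Cmp \<C> b b' = Idm \<C> (Cod \<C> b))"

definition ExtGrp :: "('o, 'm, 'e) extri \<Rightarrow> 'o \<Rightarrow> 'o \<Rightarrow> 'e monoid" where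
  "ExtGrp \<C> C A = \<lparr>carrier = Ext \<C> C A, mult = Eadd \<C> C A, one = Ezero \<C> C A\<rparr>"

definition is_biadditive_E :: "('o, 'm, 'e) extri \<Rightarrow> bool" where
  "is_biadditive_E \<C> \<longleftrightarrow>
     (\<forall>C \<in> Ob \<C>. \<forall>A \<in> Ob \<C>. comm_group (ExtGrp \<C> C A)) \<and>
     \<comment> \<open>covariant part a_*\<close>
     (\<forall>C A A' a d. C \<in> Ob \<C> \<longrightarrow> a \<in> Hom \<C> A A' \<longrightarrow> d \<in> Ext \<C> C A \<longrightarrow>
        Push \<C> C a d \<in> Ext \<C> C A') \<and>
     (\<forall>C A A' a d d'. C \<in> Ob \<C> \<longrightarrow> a \<in> Hom \<C> A A' \<longrightarrow> d \<in> Ext \<C> C A \<longrightarrow> d' \<in> Ext \<C> C A \<longrightarrow>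
        Push \<C> C a (Eadd \<C> C A d d') = Eadd \<C> C A' (Push \<C> C a d) (Push \<C> C a d')) \<and>
     (\<forall>C A d. C \<in> Ob \<C> \<longrightarrow> A \<in> Ob \<C> \<longrightarrow> d \<in> Ext \<C> C A \<longrightarrow> Push \<C> C (Idm \<C> A) d = d) \<and>
     (\<forall>C A A' A'' a a' d. C \<in> Ob \<C> \<longrightarrow> a \<in> Hom \<C> A A' \<longrightarrow> a' \<in> Hom \<C> A' A'' \<longrightarrow> d \<in> Ext \<C> C A \<longrightarrow>
        Push \<C> C (Cmp \<C> a' a) d = Push \<C> C a' (Push \<C> C a d)) \<and>
     (\<forall>C A A' a b d. C \<in> Ob \<C> \<longrightarrow> a \<in> Hom \<C> A A' \<longrightarrow> b \<in> Hom \<C> A A' \<longrightarrow> d \<in> Ext \<C> C A \<longrightarrow>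
        Push \<C> C (Madd \<C> a b) d = Eadd \<C> C A' (Push \<C> C a d) (Push \<C> C b d)) \<and>
     \<comment> \<open>contravariant part c^*\<close>
     (\<forall>C C' A c d. A \<in> Ob \<C> \<longrightarrow> c \<in> Hom \<C> C' C \<longrightarrow> d \<in> Ext \<C> C A \<longrightarrow>
        Pull \<C> c A d \<in> Ext \<C> C' A) \<and>
     (\<forall>C C' A c d d'. A \<in> Ob \<C> \<longrightarrow> c \<in> Hom \<C> C' C \<longrightarrow> d \<in> Ext \<C> C A \<longrightarrow> d' \<in> Ext \<C> C A \<longrightarrow>
        Pull \<C> c A (Eadd \<C> C A d d') = Eadd \<C> C' A (Pull \<C> c A d) (Pull \<C> c A d')) \<and>
     (\<forall>C A d. C \<in> Ob \<C> \<longrightarrow> A \<in> Ob \<C> \<longrightarrow> d \<in> Ext \<C> C A \<longrightarrow> Pull \<C> (Idm \<C> C) A d = d) \<and>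
     (\<forall>C C' C'' A c c' d. A \<in> Ob \<C> \<longrightarrow> c \<in> Hom \<C> C' C \<longrightarrow> c' \<in> Hom \<C> C'' C' \<longrightarrow> d \<in> Ext \<C> C A \<longrightarrow>
        Pull \<C> (Cmp \<C> c c') A d = Pull \<C> c' A (Pull \<C> c A d)) \<and>
     (\<forall>C C' A c e d. A \<in> Ob \<C> \<longrightarrow> c \<in> Hom \<C> C' C \<longrightarrow> e \<in> Hom \<C> C' C \<longrightarrow> d \<in> Ext \<C> C A \<longrightarrow>
        Pull \<C> (Madd \<C> c e) A d = Eadd \<C> C' A (Pull \<C> c A d) (Pull \<C> e A d)) \<and>
     \<comment> \<open>bifunctoriality\<close>
     (\<forall>C C' A A' c a d. c \<in> Hom \<C> C' C \<longrightarrow> a \<in> Hom \<C> A A' \<longrightarrow> d \<in> Ext \<C> C A \<longrightarrow>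
        Push \<C> C' a (Pull \<C> c A d) = Pull \<C> c A' (Push \<C> C a d))"

definition seq_equiv :: "('o, 'm, 'e) extri \<Rightarrow> 'm \<Rightarrow> 'm \<Rightarrow> 'm \<Rightarrow> 'm \<Rightarrow> bool" where
  "seq_equiv \<C> x y x' y' \<longleftrightarrow>
     x' \<in> Hom \<C> (Dom \<C> x) (Cod \<C> x') \<and> y' \<in> Hom \<C> (Cod \<C> x') (Cod \<C> y) \<and>
     (\<exists>b \<in> Hom \<C> (Cod \<C> x) (Cod \<C> x'). is_iso \<C> b \<and> Cmp \<C> b x = x' \<and> Cmp \<C> y' b = y)"

definition msum :: "('o, 'm, 'e) extri \<Rightarrow> 'm \<Rightarrow> 'm \<Rightarrow> 'm \<Rightarrow> 'm \<Rightarrow> 'm \<Rightarrow> 'm \<Rightarrow> 'm" where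
  "msum \<C> p1 p2 j1 j2 f f' = Madd \<C> (Cmp \<C> j1 (Cmp \<C> f p1)) (Cmp \<C> j2 (Cmp \<C> f' p2))"

definition esum :: "('o, 'm, 'e) extri \<Rightarrow> 'o \<Rightarrow> 'o \<Rightarrow> 'o \<Rightarrow> 'o \<Rightarrow> 'm \<Rightarrow> 'm \<Rightarrow> 'm \<Rightarrow> 'm \<Rightarrow> 'e \<Rightarrow> 'e \<Rightarrow> 'e" where
  "esum \<C> CC AA A A' q1 q2 i1 i2 d d' =
     Eadd \<C> CC AA (Push \<C> CC i1 (Pull \<C> q1 A d)) (Push \<C> CC i2 (Pull \<C> q2 A' d'))"

definition is_additive_realization :: "('o, 'm, 'e) extri \<Rightarrow> bool" where
  "is_additive_realization \<C> \<longleftrightarrow>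
     (\<forall>C A d x y. Rlz \<C> C A d x y \<longrightarrow>
        C \<in> Ob \<C> \<and> A \<in> Ob \<C> \<and> d \<in> Ext \<C> C A \<and>
        x \<in> Hom \<C> A (Cod \<C> x) \<and> y \<in> Hom \<C> (Cod \<C> x) C) \<and>
     (\<forall>C A d. C \<in> Ob \<C> \<longrightarrow> A \<in> Ob \<C> \<longrightarrow> d \<in> Ext \<C> C A \<longrightarrow> (\<exists>x y. Rlz \<C> C A d x y)) \<and>
     (\<forall>C A d x y x' y'. Rlz \<C> C A d x y \<longrightarrow> (Rlz \<C> C A d x' y' \<longleftrightarrow> seq_equiv \<C> x y x' y')) \<and>
     \<comment> \<open>realization condition\<close>
     (\<forall>C A d x y C' A' d' x' y' a c. Rlz \<C> C A d x y \<longrightarrow> Rlz \<C> C' A' d' x' y' \<longrightarrow>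
        a \<in> Hom \<C> A A' \<longrightarrow> c \<in> Hom \<C> C C' \<longrightarrow> Push \<C> C a d = Pull \<C> c A' d' \<longrightarrow>
        (\<exists>b \<in> Hom \<C> (Cod \<C> x) (Cod \<C> x'). Cmp \<C> b x = Cmp \<C> x' a \<and> Cmp \<C> y' b = Cmp \<C> c y)) \<and>
     \<comment> \<open>s(0) is the split sequence\<close>
     (\<forall>X A C i1 i2 p1 p2. is_biprod \<C> X A C i1 i2 p1 p2 \<longrightarrow> Rlz \<C> C A (Ezero \<C> C A) i1 p2) \<and>
     \<comment> \<open>s(d \<oplus> d') = s(d) \<oplus> s(d')\<close>
     (\<forall>C A d x y C' A' d' x' y' AA i1 i2 p1 p2 BB j1 j2 r1 r2 CC k1 k2 q1 q2.
        Rlz \<C> C A d x y \<longrightarrow> Rlz \<C> C' A' d' x' y' \<longrightarrow>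
        is_biprod \<C> AA A A' i1 i2 p1 p2 \<longrightarrow>
        is_biprod \<C> BB (Cod \<C> x) (Cod \<C> x') j1 j2 r1 r2 \<longrightarrow>
        is_biprod \<C> CC C C' k1 k2 q1 q2 \<longrightarrow>
        Rlz \<C> CC AA (esum \<C> CC AA A A' q1 q2 i1 i2 d d')
          (msum \<C> p1 p2 j1 j2 x x') (msum \<C> r1 r2 k1 k2 y y'))"

definition ET3 :: "('o, 'm, 'e) extri \<Rightarrow> bool" where
  "ET3 \<C> \<longleftrightarrow>
     (\<forall>C A d x y C' A' d' x' y' a b. Rlz \<C> C A d x y \<longrightarrow> Rlz \<C> C' A' d' x' y' \<longrightarrow>
        a \<in> Hom \<C> A A' \<longrightarrow> b \<in> Hom \<C> (Cod \<C> x) (Cod \<C> x') \<longrightarrow> Cmp \<C> b x = Cmp \<C> x' a \<longrightarrow>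
        (\<exists>c \<in> Hom \<C> C C'. Cmp \<C> c y = Cmp \<C> y' b \<and> Push \<C> C a d = Pull \<C> c A' d'))"

definition ET3op :: "('o, 'm, 'e) extri \<Rightarrow> bool" where
  "ET3op \<C> \<longleftrightarrow>
     (\<forall>C A d x y C' A' d' x' y' b c. Rlz \<C> C A d x y \<longrightarrow> Rlz \<C> C' A' d' x' y' \<longrightarrow>
        b \<in> Hom \<C> (Cod \<C> x) (Cod \<C> x') \<longrightarrow> c \<in> Hom \<C> C C' \<longrightarrow> Cmp \<C> c y = Cmp \<C> y' b \<longrightarrow>
        (\<exists>a \<in> Hom \<C> A A'. Cmp \<C> b x = Cmp \<C> x' a \<and> Push \<C> C a d = Pull \<C> c A' d'))"

definition ET4 :: "('o, 'm, 'e) extri \<Rightarrow> bool" where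
  "ET4 \<C> \<longleftrightarrow>
     (\<forall>A D F d f f' d' g g'. Rlz \<C> D A d f f' \<longrightarrow> Rlz \<C> F (Cod \<C> f) d' g g' \<longrightarrow>
        (\<exists>E dd e h h' d''. E \<in> Ob \<C> \<and>
           dd \<in> Hom \<C> D E \<and> e \<in> Hom \<C> E F \<and>
           Rlz \<C> E A d'' h h' \<and> Cod \<C> h = Cod \<C> g \<and>
           h = Cmp \<C> g f \<and> Cmp \<C> dd f' = Cmp \<C> h' g \<and> Cmp \<C> e h' = g' \<and>
           Rlz \<C> F D (Push \<C> F f' d') dd e \<and>
           Pull \<C> dd A d'' = d \<and>
           Push \<C> E f d'' = Pull \<C> e (Cod \<C> f) d'))"

definition ET4op :: "('o, 'm, 'e) extri \<Rightarrow> bool" where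
  "ET4op \<C> \<longleftrightarrow>
     (\<forall>A D F d f f' d' g g'. Rlz \<C> A D d f' f \<longrightarrow> Rlz \<C> (Cod \<C> f') F d' g' g \<longrightarrow>
        (\<exists>E dd e h h' d''. E \<in> Ob \<C> \<and>
           dd \<in> Hom \<C> E D \<and> e \<in> Hom \<C> F E \<and>
           Rlz \<C> A E d'' h' h \<and> Dom \<C> h = Dom \<C> g \<and>
           h = Cmp \<C> f g \<and> Cmp \<C> f' dd = Cmp \<C> g h' \<and> Cmp \<C> h' e = g' \<and>
           Rlz \<C> D F (Pull \<C> f' F d') e dd \<and>
           Push \<C> A dd d'' = d \<and>
           Pull \<C> f E d'' = Push \<C> (Cod \<C> f') e d'))"

definition extriangulated :: "('o, 'm, 'e) extri \<Rightarrow> bool" where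
  "extriangulated \<C> \<longleftrightarrow> is_additive \<C> \<and> is_biadditive_E \<C> \<and> is_additive_realization \<C> \<and>
     ET3 \<C> \<and> ET3op \<C> \<and> ET4 \<C> \<and> ET4op \<C>"

definition injective_obj :: "('o, 'm, 'e) extri \<Rightarrow> 'o \<Rightarrow> bool" where
  "injective_obj \<C> I \<longleftrightarrow> I \<in> Ob \<C> \<and>
     (\<forall>C A d x y f. Rlz \<C> C A d x y \<longrightarrow> f \<in> Hom \<C> A I \<longrightarrow>
        (\<exists>g \<in> Hom \<C> (Cod \<C> x) I. Cmp \<C> g x = f))"

definition enough_injectives :: "('o, 'm, 'e) extri \<Rightarrow> bool" where
  "enough_injectives \<C> \<longleftrightarrow>
     (\<forall>A \<in> Ob \<C>. \<exists>C d x y. Rlz \<C> C A d x y \<and> injective_obj \<C> (Cod \<C> x))"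

definition is_ideal :: "('o, 'm, 'e) extri \<Rightarrow> ('o \<Rightarrow> 'o \<Rightarrow> 'm set) \<Rightarrow> bool" where
  "is_ideal \<C> I \<longleftrightarrow>
     (\<forall>X Y. I X Y \<subseteq> Hom \<C> X Y) \<and>
     (\<forall>X \<in> Ob \<C>. \<forall>Y \<in> Ob \<C>. Mzero \<C> X Y \<in> I X Y) \<and>
     (\<forall>X Y f g. f \<in> I X Y \<longrightarrow> g \<in> I X Y \<longrightarrow> Madd \<C> f g \<in> I X Y) \<and>
     (\<forall>W X Y Z f i g. f \<in> Hom \<C> W X \<longrightarrow> i \<in> I X Y \<longrightarrow> g \<in> Hom \<C> Y Z \<longrightarrow>
        Cmp \<C> g (Cmp \<C> i f) \<in> I W Z)"

definition perpE :: "('o, 'm, 'e) extri \<Rightarrow> ('o \<Rightarrow> 'o \<Rightarrow> 'm set) \<Rightarrow> 'o \<Rightarrow> 'o \<Rightarrow> 'm set" where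
  "perpE \<C> M A Y = {g \<in> Hom \<C> A Y. \<forall>X C m d. m \<in> M X C \<longrightarrow> d \<in> Ext \<C> C A \<longrightarrow>
      Pull \<C> m Y (Push \<C> C g d) = Ezero \<C> X Y}"

definition Eperp :: "('o, 'm, 'e) extri \<Rightarrow> ('o \<Rightarrow> 'o \<Rightarrow> 'm set) \<Rightarrow> 'o \<Rightarrow> 'o \<Rightarrow> 'm set" where
  "Eperp \<C> M X C = {g \<in> Hom \<C> X C. \<forall>A Y m d. m \<in> M A Y \<longrightarrow> d \<in> Ext \<C> C A \<longrightarrow>
      Pull \<C> g Y (Push \<C> C m d) = Ezero \<C> X Y}"

definition special_precover :: "('o, 'm, 'e) extri \<Rightarrow> ('o \<Rightarrow> 'o \<Rightarrow> 'm set) \<Rightarrow> 'o \<Rightarrow> 'm \<Rightarrow> bool" where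
  "special_precover \<C> I C i \<longleftrightarrow> i \<in> I (Dom \<C> i) C \<and>
     (\<exists>A d x y A' d' x' j b.
        Rlz \<C> C A d x y \<and> Rlz \<C> C A' d' x' i \<and>
        j \<in> Hom \<C> A A' \<and> b \<in> Hom \<C> (Cod \<C> x) (Dom \<C> i) \<and>
        Cmp \<C> b x = Cmp \<C> x' j \<and> Cmp \<C> i b = Cmp \<C> (Idm \<C> C) y \<and>
        Push \<C> C j d = Pull \<C> (Idm \<C> C) A' d' \<and>
        j \<in> perpE \<C> I A A')"

definition special_preenvelope :: "('o, 'm, 'e) extri \<Rightarrow> ('o \<Rightarrow> 'o \<Rightarrow> 'm set) \<Rightarrow> 'o \<Rightarrow> 'm \<Rightarrow> bool" where
  "special_preenvelope \<C> J A e \<longleftrightarrow> e \<in> J A (Cod \<C> e) \<and>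
     (\<exists>Y d y C d' x' y' b j.
        Rlz \<C> Y A d e y \<and> Rlz \<C> C A d' x' y' \<and>
        b \<in> Hom \<C> (Cod \<C> e) (Cod \<C> x') \<and> j \<in> Hom \<C> Y C \<and>
        Cmp \<C> b e = Cmp \<C> x' (Idm \<C> A) \<and> Cmp \<C> j y = Cmp \<C> y' b \<and>
        Push \<C> Y (Idm \<C> A) d = Pull \<C> j A d' \<and>
        j \<in> Eperp \<C> J Y C)"

definition special_precovering_ideal :: "('o, 'm, 'e) extri \<Rightarrow> ('o \<Rightarrow> 'o \<Rightarrow> 'm set) \<Rightarrow> bool" where
  "special_precovering_ideal \<C> I \<longleftrightarrow> is_ideal \<C> I \<and>
     (\<forall>C \<in> Ob \<C>. \<exists>i. special_precover \<C> I C i)"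

definition special_preenveloping_ideal :: "('o, 'm, 'e) extri \<Rightarrow> ('o \<Rightarrow> 'o \<Rightarrow> 'm set) \<Rightarrow> bool" where
  "special_preenveloping_ideal \<C> J \<longleftrightarrow> is_ideal \<C> J \<and>
     (\<forall>A \<in> Ob \<C>. \<exists>e. special_preenvelope \<C> J A e)"

end

theory Submission
  imports Defs
begin

text \<open>
  Take an \<open>\<EE>\<close>-triangle \<open>A \<rightarrow> E \<rightarrow> C \<dashrightarrow>\<^sup>\<delta>\<close> with \<open>E\<close> injective and a special
  \<open>\<I>\<close>-precover \<open>i : X \<rightarrow> C\<close>, and realize \<open>i\<^sup>\<star>\<delta>\<close> as \<open>A \<rightarrow>\<^sup>e M \<rightarrow> X\<close>. The morphism of
  triangles \<open>(id, b, i)\<close> exhibits \<open>e\<close> as a special \<open>\<I>\<^sup>\<perp>\<close>-preenvelope, because \<open>i \<in> \<I>\<close>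
  lies in \<open>\<^sup>\<perp>(\<I>\<^sup>\<perp>)\<close>. That \<open>e \<in> \<I>\<^sup>\<perp>\<close> comes from two factorizations: by injectivity of
  \<open>E\<close> every extension of \<open>A\<close> is a pullback \<open>c\<^sup>\<star>\<delta>\<close>, and every \<open>g \<in> \<I>\<close> ending in \<open>C\<close>
  factors through the special precover \<open>i\<close>. So for \<open>m \<in> \<I>\<close> we get
  \<open>m\<^sup>\<star>e\<^sub>\<star>(c\<^sup>\<star>\<delta>) = (cm)\<^sup>\<star>e\<^sub>\<star>\<delta> = h\<^sup>\<star>i\<^sup>\<star>e\<^sub>\<star>\<delta> = h\<^sup>\<star>e\<^sub>\<star>(i\<^sup>\<star>\<delta>) = 0\<close>, as \<open>e\<close> is the
  inflation of \<open>i\<^sup>\<star>\<delta>\<close>.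
\<close>

locale extriangulated_category =
  fixes \<C> :: "('o, 'm, 'e) extri"
  assumes extriangulated: "extriangulated \<C>"
begin

lemma is_category: "is_category \<C>"
  using extriangulated unfolding extriangulated_def is_additive_def is_preadditive_def by blast

lemma is_preadditive: "is_preadditive \<C>"
  using extriangulated unfolding extriangulated_def is_additive_def by blast

lemma is_biadditive_E: "is_biadditive_E \<C>"
  using extriangulated unfolding extriangulated_def by blast

lemma is_additive_realization: "is_additive_realization \<C>"
  using extriangulated unfolding extriangulated_def by blast

lemma hom_obs: "f \<in> Hom \<C> X Y \<Longrightarrow> X \<in> Ob \<C> \<and> Y \<in> Ob \<C>"
  using is_category unfolding is_category_def Hom_def by blast

lemma cmp_hom: "f \<in> Hom \<C> X Y \<Longrightarrow> g \<in> Hom \<C> Y Z \<Longrightarrow> Cmp \<C> g f \<in> Hom \<C> X Z"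
  using is_category unfolding is_category_def by blast

lemma idm_hom: "X \<in> Ob \<C> \<Longrightarrow> Idm \<C> X \<in> Hom \<C> X X"
  using is_category unfolding is_category_def by blast

lemma cmp_idm_right: "f \<in> Hom \<C> X Y \<Longrightarrow> Cmp \<C> f (Idm \<C> X) = f"
  using is_category unfolding is_category_def by blast

lemma cmp_assoc:
  "f \<in> Hom \<C> W X \<Longrightarrow> g \<in> Hom \<C> X Y \<Longrightarrow> h \<in> Hom \<C> Y Z \<Longrightarrow>
     Cmp \<C> h (Cmp \<C> g f) = Cmp \<C> (Cmp \<C> h g) f"
  using is_category unfolding is_category_def by blast

lemma HomGrp_group: "X \<in> Ob \<C> \<Longrightarrow> Y \<in> Ob \<C> \<Longrightarrow> group (HomGrp \<C> X Y)"
  using is_preadditive unfolding is_preadditive_def comm_group_def by blast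

lemma Mzero_hom: "X \<in> Ob \<C> \<Longrightarrow> Y \<in> Ob \<C> \<Longrightarrow> Mzero \<C> X Y \<in> Hom \<C> X Y"
  using monoid.one_closed[OF group.is_monoid[OF HomGrp_group]] by (simp add: HomGrp_def)

lemma Madd_hom: "f \<in> Hom \<C> X Y \<Longrightarrow> g \<in> Hom \<C> X Y \<Longrightarrow> Madd \<C> f g \<in> Hom \<C> X Y"
  using monoid.m_closed[OF group.is_monoid[OF HomGrp_group], of X Y f g] hom_obs[of f X Y]
  by (simp add: HomGrp_def)

lemma Madd_Mzero_Mzero: "X \<in> Ob \<C> \<Longrightarrow> Y \<in> Ob \<C> \<Longrightarrow> Madd \<C> (Mzero \<C> X Y) (Mzero \<C> X Y) = Mzero \<C> X Y"
  using monoid.l_one[OF group.is_monoid[OF HomGrp_group], of X Y "Mzero \<C> X Y"] Mzero_hom[of X Y]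
  by (simp add: HomGrp_def)

lemma biprod_exists: "A1 \<in> Ob \<C> \<Longrightarrow> A2 \<in> Ob \<C> \<Longrightarrow> \<exists>X i1 i2 p1 p2. is_biprod \<C> X A1 A2 i1 i2 p1 p2"
  using extriangulated unfolding extriangulated_def is_additive_def by blast

lemma ExtGrp_group: "C \<in> Ob \<C> \<Longrightarrow> A \<in> Ob \<C> \<Longrightarrow> group (ExtGrp \<C> C A)"
  using is_biadditive_E comm_group.axioms(2) unfolding is_biadditive_E_def by (elim conjE) blast

lemma Ezero_Ext: "C \<in> Ob \<C> \<Longrightarrow> A \<in> Ob \<C> \<Longrightarrow> Ezero \<C> C A \<in> Ext \<C> C A"
  using monoid.one_closed[OF group.is_monoid[OF ExtGrp_group]] by (simp add: ExtGrp_def)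

lemma Eadd_Ezero_Ezero: "C \<in> Ob \<C> \<Longrightarrow> A \<in> Ob \<C> \<Longrightarrow> Eadd \<C> C A (Ezero \<C> C A) (Ezero \<C> C A) = Ezero \<C> C A"
  using monoid.l_one[OF group.is_monoid[OF ExtGrp_group], of C A "Ezero \<C> C A"] Ezero_Ext[of C A]
  by (simp add: ExtGrp_def)

lemma Eadd_idem_eq_Ezero:
  "C \<in> Ob \<C> \<Longrightarrow> A \<in> Ob \<C> \<Longrightarrow> d \<in> Ext \<C> C A \<Longrightarrow> Eadd \<C> C A d d = d \<Longrightarrow> d = Ezero \<C> C A"
  using group.l_cancel_one[OF ExtGrp_group, of C A d d] unfolding ExtGrp_def by simp

lemma push_Ext: "C \<in> Ob \<C> \<Longrightarrow> a \<in> Hom \<C> A A' \<Longrightarrow> d \<in> Ext \<C> C A \<Longrightarrow> Push \<C> C a d \<in> Ext \<C> C A'"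
  using is_biadditive_E unfolding is_biadditive_E_def by (elim conjE) (metis (no_types, lifting))

lemma push_Eadd:
  "C \<in> Ob \<C> \<Longrightarrow> a \<in> Hom \<C> A A' \<Longrightarrow> d \<in> Ext \<C> C A \<Longrightarrow> d' \<in> Ext \<C> C A \<Longrightarrow>
     Push \<C> C a (Eadd \<C> C A d d') = Eadd \<C> C A' (Push \<C> C a d) (Push \<C> C a d')"
  using is_biadditive_E unfolding is_biadditive_E_def by (elim conjE) (metis (no_types, lifting))

lemma push_idm: "C \<in> Ob \<C> \<Longrightarrow> A \<in> Ob \<C> \<Longrightarrow> d \<in> Ext \<C> C A \<Longrightarrow> Push \<C> C (Idm \<C> A) d = d"
  using is_biadditive_E unfolding is_biadditive_E_def by (elim conjE) (metis (no_types, lifting))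

lemma push_cmp:
  "C \<in> Ob \<C> \<Longrightarrow> a \<in> Hom \<C> A A' \<Longrightarrow> a' \<in> Hom \<C> A' A'' \<Longrightarrow> d \<in> Ext \<C> C A \<Longrightarrow>
     Push \<C> C (Cmp \<C> a' a) d = Push \<C> C a' (Push \<C> C a d)"
  using is_biadditive_E unfolding is_biadditive_E_def by (elim conjE) (metis (no_types, lifting))

lemma push_Madd:
  "C \<in> Ob \<C> \<Longrightarrow> a \<in> Hom \<C> A A' \<Longrightarrow> b \<in> Hom \<C> A A' \<Longrightarrow> d \<in> Ext \<C> C A \<Longrightarrow>
     Push \<C> C (Madd \<C> a b) d = Eadd \<C> C A' (Push \<C> C a d) (Push \<C> C b d)"
  using is_biadditive_E unfolding is_biadditive_E_def by (elim conjE) (metis (no_types, lifting))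

lemma pull_Ext: "A \<in> Ob \<C> \<Longrightarrow> c \<in> Hom \<C> C' C \<Longrightarrow> d \<in> Ext \<C> C A \<Longrightarrow> Pull \<C> c A d \<in> Ext \<C> C' A"
  using is_biadditive_E unfolding is_biadditive_E_def by (elim conjE) (metis (no_types, lifting))

lemma pull_Eadd:
  "A \<in> Ob \<C> \<Longrightarrow> c \<in> Hom \<C> C' C \<Longrightarrow> d \<in> Ext \<C> C A \<Longrightarrow> d' \<in> Ext \<C> C A \<Longrightarrow>
     Pull \<C> c A (Eadd \<C> C A d d') = Eadd \<C> C' A (Pull \<C> c A d) (Pull \<C> c A d')"
  using is_biadditive_E unfolding is_biadditive_E_def by (elim conjE) (metis (no_types, lifting))

lemma pull_idm: "C \<in> Ob \<C> \<Longrightarrow> A \<in> Ob \<C> \<Longrightarrow> d \<in> Ext \<C> C A \<Longrightarrow> Pull \<C> (Idm \<C> C) A d = d"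
  using is_biadditive_E unfolding is_biadditive_E_def by (elim conjE) (metis (no_types, lifting))

lemma pull_cmp:
  "A \<in> Ob \<C> \<Longrightarrow> c \<in> Hom \<C> C' C \<Longrightarrow> c' \<in> Hom \<C> C'' C' \<Longrightarrow> d \<in> Ext \<C> C A \<Longrightarrow>
     Pull \<C> (Cmp \<C> c c') A d = Pull \<C> c' A (Pull \<C> c A d)"
  using is_biadditive_E unfolding is_biadditive_E_def by (elim conjE) (metis (no_types, lifting))

lemma push_pull:
  "c \<in> Hom \<C> C' C \<Longrightarrow> a \<in> Hom \<C> A A' \<Longrightarrow> d \<in> Ext \<C> C A \<Longrightarrow>
     Push \<C> C' a (Pull \<C> c A d) = Pull \<C> c A' (Push \<C> C a d)"
  using is_biadditive_E unfolding is_biadditive_E_def by (elim conjE) (metis (no_types, lifting))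

lemma pull_Ezero: "A \<in> Ob \<C> \<Longrightarrow> c \<in> Hom \<C> C' C \<Longrightarrow> Pull \<C> c A (Ezero \<C> C A) = Ezero \<C> C' A"
  using pull_Eadd[of A c C' C "Ezero \<C> C A" "Ezero \<C> C A"] Eadd_Ezero_Ezero[of C A]
    Eadd_idem_eq_Ezero[of C' A] pull_Ext[of A c C' C] Ezero_Ext[of C A] hom_obs[of c C' C]
  by simp

lemma push_Ezero: "C \<in> Ob \<C> \<Longrightarrow> a \<in> Hom \<C> A A' \<Longrightarrow> Push \<C> C a (Ezero \<C> C A) = Ezero \<C> C A'"
  using push_Eadd[of C a A A' "Ezero \<C> C A" "Ezero \<C> C A"] Eadd_Ezero_Ezero[of C A]
    Eadd_idem_eq_Ezero[of C A'] push_Ext[of C a A A'] Ezero_Ext[of C A] hom_obs[of a A A']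
  by simp

lemma push_Mzero:
  "C \<in> Ob \<C> \<Longrightarrow> A \<in> Ob \<C> \<Longrightarrow> A' \<in> Ob \<C> \<Longrightarrow> d \<in> Ext \<C> C A \<Longrightarrow> Push \<C> C (Mzero \<C> A A') d = Ezero \<C> C A'"
  using push_Madd[of C "Mzero \<C> A A'" A A' "Mzero \<C> A A'" d] Madd_Mzero_Mzero[of A A']
    Eadd_idem_eq_Ezero[of C A'] push_Ext[of C "Mzero \<C> A A'" A A' d] Mzero_hom[of A A']
  by simp

lemma Rlz_props:
  "Rlz \<C> C A d x y \<Longrightarrow>
     C \<in> Ob \<C> \<and> A \<in> Ob \<C> \<and> d \<in> Ext \<C> C A \<and> x \<in> Hom \<C> A (Cod \<C> x) \<and> y \<in> Hom \<C> (Cod \<C> x) C"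
  using is_additive_realization unfolding is_additive_realization_def
  by (elim conjE) (metis (no_types, lifting))

lemma Rlz_exists: "C \<in> Ob \<C> \<Longrightarrow> A \<in> Ob \<C> \<Longrightarrow> d \<in> Ext \<C> C A \<Longrightarrow> \<exists>x y. Rlz \<C> C A d x y"
  using is_additive_realization unfolding is_additive_realization_def
  by (elim conjE) (metis (no_types, lifting))

lemma Rlz_morphism:
  "Rlz \<C> C A d x y \<Longrightarrow> Rlz \<C> C' A' d' x' y' \<Longrightarrow>
     a \<in> Hom \<C> A A' \<Longrightarrow> c \<in> Hom \<C> C C' \<Longrightarrow> Push \<C> C a d = Pull \<C> c A' d' \<Longrightarrow>
     \<exists>b \<in> Hom \<C> (Cod \<C> x) (Cod \<C> x'). Cmp \<C> b x = Cmp \<C> x' a \<and> Cmp \<C> y' b = Cmp \<C> c y"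
  using is_additive_realization unfolding is_additive_realization_def
  by (elim conjE) (metis (no_types, lifting))

lemma Rlz_Ezero_biprod: "is_biprod \<C> X A C i1 i2 p1 p2 \<Longrightarrow> Rlz \<C> C A (Ezero \<C> C A) i1 p2"
  using is_additive_realization unfolding is_additive_realization_def
  by (elim conjE) (metis (no_types, lifting))

lemma ET3_rule:
  "Rlz \<C> C A d x y \<Longrightarrow> Rlz \<C> C' A' d' x' y' \<Longrightarrow>
     a \<in> Hom \<C> A A' \<Longrightarrow> b \<in> Hom \<C> (Cod \<C> x) (Cod \<C> x') \<Longrightarrow> Cmp \<C> b x = Cmp \<C> x' a \<Longrightarrow>
     \<exists>c \<in> Hom \<C> C C'. Cmp \<C> c y = Cmp \<C> y' b \<and> Push \<C> C a d = Pull \<C> c A' d'"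
  using extriangulated unfolding extriangulated_def ET3_def by (metis (no_types, lifting))

text \<open>Compare the triangle with the split one \<open>B \<rightarrow> B \<oplus> C \<rightarrow> C\<close> via \<open>(x, i\<^sub>1, -)\<close>.\<close>
lemma push_inflation_Ezero:
  assumes "Rlz \<C> C A d x y"
  shows "Push \<C> C x d = Ezero \<C> C (Cod \<C> x)"
proof -
  note tri = Rlz_props[OF assms]
  then have B: "Cod \<C> x \<in> Ob \<C>" using hom_obs by blast
  obtain W i1 i2 p1 p2 where bp: "is_biprod \<C> W (Cod \<C> x) C i1 i2 p1 p2"
    using biprod_exists[OF B] tri by blast
  then have "i1 \<in> Hom \<C> (Cod \<C> x) (Cod \<C> i1)"
    unfolding is_biprod_def Hom_def by simp
  then obtain c where "c \<in> Hom \<C> C C" "Push \<C> C x d = Pull \<C> c (Cod \<C> x) (Ezero \<C> C (Cod \<C> x))"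
    using ET3_rule[OF assms Rlz_Ezero_biprod[OF bp], of x i1] tri by blast
  then show ?thesis using pull_Ezero B by simp
qed

text \<open>The lift exists because \<open>g\<^sup>\<star>d = 0\<close> is realized by the split triangle \<open>A \<rightarrow> A \<oplus> X \<rightarrow> X\<close>.\<close>
lemma deflation_factors:
  assumes tri: "Rlz \<C> C A d x y" and g: "g \<in> Hom \<C> X C"
    and vanish: "Pull \<C> g A d = Ezero \<C> X A"
  shows "\<exists>h \<in> Hom \<C> X (Cod \<C> x). g = Cmp \<C> y h"
proof -
  have X: "X \<in> Ob \<C>" and A: "A \<in> Ob \<C>" using hom_obs[OF g] Rlz_props[OF tri] by auto
  obtain W i1 i2 p1 p2 where bp: "is_biprod \<C> W A X i1 i2 p1 p2"
    using biprod_exists[OF A X] by blast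
  then have i2: "i2 \<in> Hom \<C> X W" and p2: "p2 \<in> Hom \<C> W X" and p2i2: "Cmp \<C> p2 i2 = Idm \<C> X"
    and cod_i1: "Cod \<C> i1 = W"
    unfolding is_biprod_def Hom_def by auto
  have "Push \<C> X (Idm \<C> A) (Ezero \<C> X A) = Pull \<C> g A d"
    using push_idm[OF X A Ezero_Ext[OF X A]] vanish by simp
  then obtain b where b: "b \<in> Hom \<C> W (Cod \<C> x)" and yb: "Cmp \<C> y b = Cmp \<C> g p2"
    using Rlz_morphism[OF Rlz_Ezero_biprod[OF bp] tri idm_hom[OF A] g] cod_i1 by auto
  have y: "y \<in> Hom \<C> (Cod \<C> x) C" using Rlz_props[OF tri] by blast
  have "g = Cmp \<C> g (Cmp \<C> p2 i2)" using cmp_idm_right[OF g] p2i2 by simp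
  also have "\<dots> = Cmp \<C> (Cmp \<C> y b) i2" using cmp_assoc[OF i2 p2 g] yb by simp
  also have "\<dots> = Cmp \<C> y (Cmp \<C> b i2)" using cmp_assoc[OF i2 b y] by simp
  finally show ?thesis using cmp_hom[OF i2 b] by blast
qed

lemma injective_middle_pulls_back:
  assumes tri: "Rlz \<C> C A \<delta> x y" and inj: "injective_obj \<C> (Cod \<C> x)"
    and d: "d \<in> Ext \<C> C' A" and C': "C' \<in> Ob \<C>"
  shows "\<exists>c \<in> Hom \<C> C' C. d = Pull \<C> c A \<delta>"
proof -
  have A: "A \<in> Ob \<C>" and x: "x \<in> Hom \<C> A (Cod \<C> x)" using Rlz_props[OF tri] by auto
  obtain x' y' where tri': "Rlz \<C> C' A d x' y'" using Rlz_exists[OF C' A d] by blast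
  obtain b where b: "b \<in> Hom \<C> (Cod \<C> x') (Cod \<C> x)" and "Cmp \<C> b x' = x"
    using inj tri' x unfolding injective_obj_def by blast
  then have "Cmp \<C> b x' = Cmp \<C> x (Idm \<C> A)" using cmp_idm_right[OF x] by simp
  then obtain c where "c \<in> Hom \<C> C' C" "Push \<C> C' (Idm \<C> A) d = Pull \<C> c A \<delta>"
    using ET3_rule[OF tri' tri idm_hom[OF A] b] by blast
  then show ?thesis using push_idm[OF C' A d] by auto
qed

lemma perpE_ideal:
  assumes M_hom: "\<And>X C. M X C \<subseteq> Hom \<C> X C"
  shows "is_ideal \<C> (perpE \<C> M)"
  unfolding is_ideal_def
proof (intro conjI allI impI ballI)
  fix X Y
  show "perpE \<C> M X Y \<subseteq> Hom \<C> X Y" unfolding perpE_def by blast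
next
  fix X Y assume X: "X \<in> Ob \<C>" and Y: "Y \<in> Ob \<C>"
  show "Mzero \<C> X Y \<in> perpE \<C> M X Y"
    unfolding perpE_def
  proof (intro CollectI conjI allI impI)
    fix X' C m d assume m: "m \<in> M X' C" and d: "d \<in> Ext \<C> C X"
    with M_hom have "m \<in> Hom \<C> X' C" by blast
    then show "Pull \<C> m Y (Push \<C> C (Mzero \<C> X Y) d) = Ezero \<C> X' Y"
      using push_Mzero[OF _ X Y d] pull_Ezero[OF Y] hom_obs by simp
  qed (rule Mzero_hom[OF X Y])
next
  fix X Y f g assume f: "f \<in> perpE \<C> M X Y" and g: "g \<in> perpE \<C> M X Y"
  then have fh: "f \<in> Hom \<C> X Y" and gh: "g \<in> Hom \<C> X Y" unfolding perpE_def by auto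
  have Y: "Y \<in> Ob \<C>" using hom_obs[OF fh] by blast
  show "Madd \<C> f g \<in> perpE \<C> M X Y"
    unfolding perpE_def
  proof (intro CollectI conjI allI impI)
    fix X' C m d assume m: "m \<in> M X' C" and d: "d \<in> Ext \<C> C X"
    with M_hom have mh: "m \<in> Hom \<C> X' C" by blast
    then have C: "C \<in> Ob \<C>" "X' \<in> Ob \<C>" using hom_obs by auto
    have "Pull \<C> m Y (Push \<C> C (Madd \<C> f g) d) =
        Eadd \<C> X' Y (Pull \<C> m Y (Push \<C> C f d)) (Pull \<C> m Y (Push \<C> C g d))"
      using push_Madd[OF C(1) fh gh d] pull_Eadd[OF Y mh push_Ext[OF C(1) fh d] push_Ext[OF C(1) gh d]]
      by simp
    also have "\<dots> = Eadd \<C> X' Y (Ezero \<C> X' Y) (Ezero \<C> X' Y)"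
      using f g m d unfolding perpE_def by auto
    also have "\<dots> = Ezero \<C> X' Y" using Eadd_Ezero_Ezero C Y by blast
    finally show "Pull \<C> m Y (Push \<C> C (Madd \<C> f g) d) = Ezero \<C> X' Y" .
  qed (rule Madd_hom[OF fh gh])
next
  fix W X Y Z f i g assume f: "f \<in> Hom \<C> W X" and i: "i \<in> perpE \<C> M X Y" and g: "g \<in> Hom \<C> Y Z"
  have ih: "i \<in> Hom \<C> X Y" using i unfolding perpE_def by auto
  show "Cmp \<C> g (Cmp \<C> i f) \<in> perpE \<C> M W Z"
    unfolding perpE_def
  proof (intro CollectI conjI allI impI)
    fix X' C m d assume m: "m \<in> M X' C" and d: "d \<in> Ext \<C> C W"
    with M_hom have mh: "m \<in> Hom \<C> X' C" by blast
    then have C: "C \<in> Ob \<C>" "X' \<in> Ob \<C>" using hom_obs by auto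
    have fd: "Push \<C> C f d \<in> Ext \<C> C X" using push_Ext[OF C(1) f d] .
    have "Pull \<C> m Z (Push \<C> C (Cmp \<C> g (Cmp \<C> i f)) d) =
        Push \<C> X' g (Pull \<C> m Y (Push \<C> C i (Push \<C> C f d)))"
      using push_cmp[OF C(1) cmp_hom[OF f ih] g d] push_cmp[OF C(1) f ih d]
        push_pull[OF mh g push_Ext[OF C(1) ih fd]] by simp
    also have "\<dots> = Push \<C> X' g (Ezero \<C> X' Y)" using i m fd unfolding perpE_def by auto
    also have "\<dots> = Ezero \<C> X' Z" using push_Ezero[OF C(2) g] .
    finally show "Pull \<C> m Z (Push \<C> C (Cmp \<C> g (Cmp \<C> i f)) d) = Ezero \<C> X' Z" .
  qed (rule cmp_hom[OF cmp_hom[OF f ih] g])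
qed

lemma special_precover_factors:
  assumes I: "is_ideal \<C> I" and sp: "special_precover \<C> I C i" and g: "g \<in> I X C"
  shows "\<exists>h \<in> Hom \<C> X (Dom \<C> i). g = Cmp \<C> i h"
proof -
  obtain A d x y A' d' x' j where tri: "Rlz \<C> C A d x y" and tri': "Rlz \<C> C A' d' x' i"
    and jd: "Push \<C> C j d = Pull \<C> (Idm \<C> C) A' d'" and j: "j \<in> perpE \<C> I A A'"
    using sp unfolding special_precover_def by blast
  note tri_props = Rlz_props[OF tri] and tri'_props = Rlz_props[OF tri']
  have gh: "g \<in> Hom \<C> X C" using I g unfolding is_ideal_def by blast
  have "d' = Push \<C> C j d" using jd pull_idm tri'_props by simp
  then have "Pull \<C> g A' d' = Ezero \<C> X A'" using j g tri_props unfolding perpE_def by blast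
  moreover have "Dom \<C> i = Cod \<C> x'" using tri'_props unfolding Hom_def by simp
  ultimately show ?thesis using deflation_factors[OF tri' gh] by simp
qed

lemma special_preenvelope_exists:
  assumes I: "is_ideal \<C> I" and A: "A \<in> Ob \<C>"
    and tri: "Rlz \<C> C A \<delta> x y" and inj: "injective_obj \<C> (Cod \<C> x)"
    and sp: "special_precover \<C> I C i"
  shows "\<exists>e. special_preenvelope \<C> (perpE \<C> I) A e"
proof -
  note tri_props = Rlz_props[OF tri]
  have C: "C \<in> Ob \<C>" and \<delta>: "\<delta> \<in> Ext \<C> C A" using tri_props by auto
  define X where "X = Dom \<C> i"
  have iI: "i \<in> I X C" using sp unfolding special_precover_def X_def by blast
  then have ih: "i \<in> Hom \<C> X C" using I unfolding is_ideal_def by blast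
  define d where "d = Pull \<C> i A \<delta>"
  have X: "X \<in> Ob \<C>" using hom_obs[OF ih] by blast
  have dE: "d \<in> Ext \<C> X A" unfolding d_def using pull_Ext[OF A ih \<delta>] .
  obtain e p where tri_e: "Rlz \<C> X A d e p" using Rlz_exists[OF X A dE] by blast
  define M where "M = Cod \<C> e"
  have eh: "e \<in> Hom \<C> A M" using Rlz_props[OF tri_e] unfolding M_def by blast
  have M: "M \<in> Ob \<C>" using hom_obs[OF eh] by blast
  have push_d: "Push \<C> X (Idm \<C> A) d = Pull \<C> i A \<delta>" using push_idm[OF X A dE] d_def by simp
  obtain b where b: "b \<in> Hom \<C> (Cod \<C> e) (Cod \<C> x)" "Cmp \<C> b e = Cmp \<C> x (Idm \<C> A)"
     "Cmp \<C> y b = Cmp \<C> i p"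
    using Rlz_morphism[OF tri_e tri idm_hom[OF A] ih push_d] by blast
  have i_perp: "i \<in> Eperp \<C> (perpE \<C> I) X C"
    using ih iI unfolding Eperp_def perpE_def by blast
  have e_perp: "e \<in> perpE \<C> I A M"
    unfolding perpE_def
  proof (intro CollectI conjI allI impI)
    fix X1 C1 m d1 assume m: "m \<in> I X1 C1" and d1: "d1 \<in> Ext \<C> C1 A"
    have mh: "m \<in> Hom \<C> X1 C1" using I m unfolding is_ideal_def by blast
    then have C1: "C1 \<in> Ob \<C>" using hom_obs by blast
    obtain c where c: "c \<in> Hom \<C> C1 C" and d1c: "d1 = Pull \<C> c A \<delta>"
      using injective_middle_pulls_back[OF tri inj d1 C1] by blast
    have "Cmp \<C> c m \<in> I X1 C"
      using I mh c cmp_idm_right[OF mh] idm_hom hom_obs[OF mh] m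
      unfolding is_ideal_def by metis
    then obtain h where h: "h \<in> Hom \<C> X1 X" and cm: "Cmp \<C> c m = Cmp \<C> i h"
      using special_precover_factors[OF I sp] unfolding X_def by blast
    have e\<delta>: "Push \<C> C e \<delta> \<in> Ext \<C> C M" using push_Ext[OF C eh \<delta>] .
    have "Pull \<C> m M (Push \<C> C1 e d1) = Pull \<C> (Cmp \<C> c m) M (Push \<C> C e \<delta>)"
      using d1c push_pull[OF c eh \<delta>] pull_cmp[OF M c mh e\<delta>] by simp
    also have "\<dots> = Pull \<C> h M (Push \<C> X e d)"
      using cm pull_cmp[OF M ih h e\<delta>] push_pull[OF ih eh \<delta>] d_def by simp
    also have "\<dots> = Ezero \<C> X1 M"
      using push_inflation_Ezero[OF tri_e] pull_Ezero[OF M h] M_def by simp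
    finally show "Pull \<C> m M (Push \<C> C1 e d1) = Ezero \<C> X1 M" .
  qed (rule eh)
  have "special_preenvelope \<C> (perpE \<C> I) A e"
    unfolding special_preenvelope_def
    using e_perp[unfolded M_def] tri_e tri b(1,2) b(3)[symmetric] ih push_d i_perp by blast
  then show ?thesis by blast
qed

end

theorem theorem4p4:
  fixes \<C> :: "('o, 'm, 'e) extri" and I :: "'o \<Rightarrow> 'o \<Rightarrow> 'm set"
  assumes "extriangulated \<C>"
    and "enough_injectives \<C>"
    and "special_precovering_ideal \<C> I"
  shows "special_preenveloping_ideal \<C> (perpE \<C> I)"
proof -
  interpret extriangulated_category \<C> by unfold_locales (rule assms(1))
  have I: "is_ideal \<C> I" using assms(3) unfolding special_precovering_ideal_def by blast
  have "\<exists>e. special_preenvelope \<C> (perpE \<C> I) A e" if A: "A \<in> Ob \<C>" for A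
  proof -
    obtain C \<delta> x y where tri: "Rlz \<C> C A \<delta> x y" and "injective_obj \<C> (Cod \<C> x)"
      using assms(2) A unfolding enough_injectives_def by blast
    moreover obtain i where "special_precover \<C> I C i"
      using assms(3) Rlz_props[OF tri] unfolding special_precovering_ideal_def by blast
    ultimately show ?thesis using special_preenvelope_exists[OF I A] by blast
  qed
  moreover have "is_ideal \<C> (perpE \<C> I)"
    using I by (intro perpE_ideal) (simp add: is_ideal_def)
  ultimately show ?thesis unfolding special_preenveloping_ideal_def by blast
qed

end
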